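(* Let $E$ be an order continuous Banach lattice with a weak unit, represented over a probability space $(\Omega,\Sigma,\mu)$ as in the context, and let $j:E\to L_1(\mu)$ be the inclusion. Then $j$ is disjointly strictly singular if and only if for every disjoint sequence $(x_n)$ in $S_E$ one has $\|j x_n\|_1\to 0$ as $n\to\infty$.
   Context: A Banach lattice $E$ is order continuous if every net decreasing in order to $0$ converges in norm to $0$; $e\in E_+$ is a weak unit if $|x|\wedge e=0$ implies $x=0$. Representation: every order continuous Banach lattice $E$ with a weak unit can be represented over a probability space $(\Omega,\Sigma,\mu)$ so that $L_\infty(\mu)\subset E\subset L_1(\mu)$, $E$ dense in $L_1(\mu)$, $L_\infty(\mu)$ dense in $E$, $\|f\|_1\le\|f\|_E\le 2\|f\|_\infty$ for $f\in L_\infty(\mu)$, and the order of $E$ induced by $L_1(\mu)$; the inclusion $j$ is then bounded. An operator $T\in\mathrm{L}(E,Y)$ is disjointly strictly singular ($\mathrm{DSS}$) if there is no disjoint sequence $(x_n)$ of non-zero vectors in $E$ such that the restriction of $T$ to the closed span $[x_n]$ is an isomorphism. *)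

theory Defs
  imports "HOL-Probability.Probability"
begin

text \<open>An order continuous Banach lattice E with a weak unit, represented over a
probability space M as in the paper: E is a set of (representatives of) integrable
real functions on the space of M, N is its lattice norm, the order is the a.e. order
induced by L1(M).\<close>

definition bounded_ae :: "'a measure \<Rightarrow> ('a \<Rightarrow> real) \<Rightarrow> real \<Rightarrow> bool" where
  "bounded_ae M g c \<longleftrightarrow> g \<in> borel_measurable M \<and> (AE t in M. \<bar>g t\<bar> \<le> c)"

definition repr_ocbl :: "'a measure \<Rightarrow> ('a \<Rightarrow> real) set \<Rightarrow> (('a \<Rightarrow> real) \<Rightarrow> real) \<Rightarrow> bool" where
  "repr_ocbl M E N \<longleftrightarrow>
     prob_space M \<and>
     (\<forall>f\<in>E. integrable M f) \<and>
     (\<forall>f\<in>E. \<forall>g\<in>E. (\<lambda>t. f t + g t) \<in> E) \<and>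
     (\<forall>f\<in>E. \<forall>c::real. (\<lambda>t. c * f t) \<in> E) \<and>
     (\<forall>f\<in>E. (\<lambda>t. \<bar>f t\<bar>) \<in> E) \<and>
     (\<forall>f\<in>E. \<forall>g. g \<in> borel_measurable M \<and> (AE t in M. f t = g t) \<longrightarrow> g \<in> E) \<and>
     (\<forall>f\<in>E. \<forall>g\<in>E. (AE t in M. f t = g t) \<longrightarrow> N f = N g) \<and>
     (\<forall>f\<in>E. N f = 0 \<longleftrightarrow> (AE t in M. f t = 0)) \<and>
     (\<forall>f\<in>E. \<forall>g\<in>E. N (\<lambda>t. f t + g t) \<le> N f + N g) \<and>
     (\<forall>f\<in>E. \<forall>c. N (\<lambda>t. c * f t) = \<bar>c\<bar> * N f) \<and>
     (\<forall>f\<in>E. \<forall>g\<in>E. (AE t in M. \<bar>f t\<bar> \<le> \<bar>g t\<bar>) \<longrightarrow> N f \<le> N g) \<and>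
     \<comment> \<open>completeness (Banach)\<close>
     (\<forall>X. (\<forall>n. X n \<in> E) \<and>
          (\<forall>\<epsilon>>0. \<exists>K. \<forall>m\<ge>K. \<forall>n\<ge>K. N (\<lambda>t. X m t - X n t) < \<epsilon>) \<longrightarrow>
          (\<exists>f\<in>E. (\<lambda>n. N (\<lambda>t. X n t - f t)) \<longlonglongrightarrow> 0)) \<and>
     \<comment> \<open>order continuity: every downward directed family of positive elements with
         infimum 0 in E (i.e. a net decreasing to 0) converges to 0 in norm\<close>
     (\<forall>D. D \<subseteq> E \<and> D \<noteq> {} \<and> (\<forall>x\<in>D. AE t in M. 0 \<le> x t) \<and>
          (\<forall>x\<in>D. \<forall>y\<in>D. \<exists>z\<in>D. (AE t in M. z t \<le> x t) \<and> (AE t in M. z t \<le> y t)) \<and>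
          (\<forall>g\<in>E. (\<forall>x\<in>D. AE t in M. g t \<le> x t) \<longrightarrow> (AE t in M. g t \<le> 0))
          \<longrightarrow> (\<forall>\<epsilon>>0. \<exists>x\<in>D. N x < \<epsilon>)) \<and>
     \<comment> \<open>weak unit\<close>
     (\<exists>e\<in>E. (AE t in M. 0 \<le> e t) \<and>
          (\<forall>f\<in>E. (AE t in M. min \<bar>f t\<bar> (e t) = 0) \<longrightarrow> (AE t in M. f t = 0))) \<and>
     \<comment> \<open>L_infinity \<subseteq> E \<subseteq> L_1 with the norm estimates\<close>
     (\<forall>g c. bounded_ae M g c \<longrightarrow> g \<in> E \<and>
          (\<integral>t. \<bar>g t\<bar> \<partial>M) \<le> N g \<and> N g \<le> 2 * c) \<and>
     \<comment> \<open>L_infinity dense in E\<close>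
     (\<forall>f\<in>E. \<forall>\<epsilon>>0. \<exists>g c. bounded_ae M g c \<and> N (\<lambda>t. f t - g t) < \<epsilon>)"

definition disjoint_seq :: "'a measure \<Rightarrow> (nat \<Rightarrow> 'a \<Rightarrow> real) \<Rightarrow> bool" where
  "disjoint_seq M x \<longleftrightarrow> (\<forall>m n. m \<noteq> n \<longrightarrow> (AE t in M. min \<bar>x m t\<bar> \<bar>x n t\<bar> = 0))"

definition closed_span :: "('a \<Rightarrow> real) set \<Rightarrow> (('a \<Rightarrow> real) \<Rightarrow> real) \<Rightarrow> (nat \<Rightarrow> 'a \<Rightarrow> real) \<Rightarrow> ('a \<Rightarrow> real) set" where
  "closed_span E N x = {y \<in> E. \<forall>\<epsilon>>0. \<exists>k a. N (\<lambda>t. y t - (\<Sum>i<k. a i * x i t)) < \<epsilon>}"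

definition incl_DSS :: "'a measure \<Rightarrow> ('a \<Rightarrow> real) set \<Rightarrow> (('a \<Rightarrow> real) \<Rightarrow> real) \<Rightarrow> bool" where
  "incl_DSS M E N \<longleftrightarrow>
     \<not> (\<exists>x. (\<forall>n. x n \<in> E \<and> \<not> (AE t in M. x n t = 0)) \<and> disjoint_seq M x \<and>
           (\<exists>c>0. \<forall>y\<in>closed_span E N x. c * N y \<le> (\<integral>t. \<bar>y t\<bar> \<partial>M)))"

end

theory Submission
  imports Defs
begin

text \<open>The L1 norm is dominated by the lattice norm N and is additive on disjoint
elements. So if disjoint normalized x_n have L1 norms at least \<delta> > 0, then
\<delta> N(y) \<le> |y|_1 on their linear span and, by continuity, on its closure: j is an
isomorphism there. A normalized disjoint sequence whose L1 norms do not tend to 0 has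
such a subsequence. Conversely, if j is bounded below by c on the closed span of a
disjoint sequence, the normalized terms of that sequence have L1 norm at least c.\<close>

lemma abs_lincomb_disjoint:
  fixes x :: "nat \<Rightarrow> real"
  assumes "\<And>i j. i \<noteq> j \<Longrightarrow> min \<bar>x i\<bar> \<bar>x j\<bar> = 0"
  shows "\<bar>\<Sum>i<k. a i * x i\<bar> = (\<Sum>i<k. \<bar>a i\<bar> * \<bar>x i\<bar>)"
proof (induction k)
  case (Suc k)
  show ?case
  proof (cases "x k = 0")
    case False
    then have "\<forall>i<k. x i = 0"
      using assms by (metis abs_eq_0 abs_ge_zero le_less min_def nat_neq_iff)
    then show ?thesis by (simp add: abs_mult)
  qed (use Suc in simp)
qed simp

lemma disjoint_seq_AE:
  assumes "disjoint_seq M x"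
  shows "AE t in M. \<forall>i j. i \<noteq> j \<longrightarrow> min \<bar>x i t\<bar> \<bar>x j t\<bar> = 0"
  unfolding AE_all_countable
proof (intro allI)
  fix i j :: nat
  show "AE t in M. i \<noteq> j \<longrightarrow> min \<bar>x i t\<bar> \<bar>x j t\<bar> = 0"
    using assms unfolding disjoint_seq_def by (cases "i = j") auto
qed

lemma integral_abs_lincomb_disjoint:
  assumes int: "\<And>i. integrable M (x i)" and "disjoint_seq M x"
  shows "(\<integral>t. \<bar>\<Sum>i<k. a i * x i t\<bar> \<partial>M) = (\<Sum>i<k. \<bar>a i\<bar> * (\<integral>t. \<bar>x i t\<bar> \<partial>M))"
proof -
  have "(\<integral>t. \<bar>\<Sum>i<k. a i * x i t\<bar> \<partial>M) = (\<integral>t. (\<Sum>i<k. \<bar>a i\<bar> * \<bar>x i t\<bar>) \<partial>M)"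
    using disjoint_seq_AE[OF assms(2)] int
    by (intro integral_cong_AE) (auto intro!: abs_lincomb_disjoint)
  also have "\<dots> = (\<Sum>i<k. \<bar>a i\<bar> * (\<integral>t. \<bar>x i t\<bar> \<partial>M))"
    using int by (simp add: integral_mult_right_zero)
  finally show ?thesis .
qed

lemma disjoint_seq_subseq:
  "disjoint_seq M x \<Longrightarrow> strict_mono r \<Longrightarrow> disjoint_seq M (\<lambda>n. x (r n))"
  unfolding disjoint_seq_def by (metis strict_mono_eq)

lemma disjoint_seq_scale:
  assumes "disjoint_seq M x"
  shows "disjoint_seq M (\<lambda>n t. c n * x n t)"
  unfolding disjoint_seq_def
proof (intro allI impI)
  fix m n :: nat assume "m \<noteq> n"
  with assms have "AE t in M. min \<bar>x m t\<bar> \<bar>x n t\<bar> = 0" unfolding disjoint_seq_def by blast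
  then show "AE t in M. min \<bar>c m * x m t\<bar> \<bar>c n * x n t\<bar> = 0"
    by eventually_elim (auto simp: min_def split: if_splits)
qed

lemma not_tendsto_zero_imp_subseq_bounded_below:
  fixes X :: "nat \<Rightarrow> real"
  assumes "\<not> X \<longlonglongrightarrow> 0" and "\<And>n. 0 \<le> X n"
  shows "\<exists>\<delta>>0. \<exists>r::nat \<Rightarrow> nat. strict_mono r \<and> (\<forall>n. \<delta> \<le> X (r n))"
proof -
  have "\<exists>\<delta>>0. \<forall>m. \<exists>n\<ge>m. \<delta> \<le> X n"
  proof (rule ccontr)
    assume "\<not> ?thesis"
    then have "\<forall>\<delta>>0. \<exists>m. \<forall>n\<ge>m. X n < \<delta>" by (meson not_le)
    then have "X \<longlonglongrightarrow> 0" unfolding LIMSEQ_def dist_real_def using assms(2) by simp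
    with assms(1) show False by simp
  qed
  then obtain \<delta> where "\<delta> > 0" and "\<forall>m. \<exists>n\<ge>m. \<delta> \<le> X n" by blast
  then have "infinite {n. \<delta> \<le> X n}"
    unfolding infinite_nat_iff_unbounded_le by auto
  from infinite_enumerate[OF this] \<open>\<delta> > 0\<close> show ?thesis by blast
qed

locale ocbl_representation =
  fixes M :: "'a measure" and E :: "('a \<Rightarrow> real) set" and N :: "('a \<Rightarrow> real) \<Rightarrow> real"
  assumes repr: "repr_ocbl M E N"
begin

lemma E_integrable: "f \<in> E \<Longrightarrow> integrable M f"
  using repr unfolding repr_ocbl_def by (elim conjE) blast

lemma E_add: "f \<in> E \<Longrightarrow> g \<in> E \<Longrightarrow> (\<lambda>t. f t + g t) \<in> E"
  using repr unfolding repr_ocbl_def by (elim conjE) blast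

lemma E_scale: "f \<in> E \<Longrightarrow> (\<lambda>t. c * f t) \<in> E"
  using repr unfolding repr_ocbl_def by (elim conjE) blast

lemma N_eq_0_iff: "f \<in> E \<Longrightarrow> N f = 0 \<longleftrightarrow> (AE t in M. f t = 0)"
  using repr unfolding repr_ocbl_def by (elim conjE) blast

lemma N_triangle: "f \<in> E \<Longrightarrow> g \<in> E \<Longrightarrow> N (\<lambda>t. f t + g t) \<le> N f + N g"
  using repr unfolding repr_ocbl_def by (elim conjE) blast

lemma N_scale: "f \<in> E \<Longrightarrow> N (\<lambda>t. c * f t) = \<bar>c\<bar> * N f"
  using repr unfolding repr_ocbl_def by (elim conjE) blast

lemma N_mono: "f \<in> E \<Longrightarrow> g \<in> E \<Longrightarrow> (AE t in M. \<bar>f t\<bar> \<le> \<bar>g t\<bar>) \<Longrightarrow> N f \<le> N g"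
  using repr unfolding repr_ocbl_def by (elim conjE) blast

lemma bounded_ae_in_E:
  "bounded_ae M g c \<Longrightarrow> g \<in> E \<and> (\<integral>t. \<bar>g t\<bar> \<partial>M) \<le> N g"
  using repr unfolding repr_ocbl_def by (elim conjE) metis

lemma E_diff: "f \<in> E \<Longrightarrow> g \<in> E \<Longrightarrow> (\<lambda>t. f t - g t) \<in> E"
  using E_add[of f "\<lambda>t. (-1) * g t"] E_scale[of g "-1"] by simp

lemma zero_in_E: "(\<lambda>t. 0) \<in> E"
  using bounded_ae_in_E[of "\<lambda>t. 0" 0] by (simp add: bounded_ae_def)

lemma N_zero: "N (\<lambda>t. 0) = 0"
  using N_eq_0_iff[OF zero_in_E] by simp

lemma N_nonneg:
  assumes "f \<in> E" shows "0 \<le> N f"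
proof -
  have "N (\<lambda>t. f t + (-1) * f t) \<le> N f + N (\<lambda>t. (-1) * f t)"
    using assms by (intro N_triangle E_scale)
  then show ?thesis using N_scale[OF assms, of "-1"] N_zero by simp
qed

text \<open>The assumed estimate |g|_1 \<le> N g only covers bounded g; it extends to all of E
by truncating |f| at height n and letting n \<rightarrow> \<infinity>.\<close>

lemma integral_abs_le_N:
  assumes f: "f \<in> E" shows "(\<integral>t. \<bar>f t\<bar> \<partial>M) \<le> N f"
proof -
  have [measurable]: "f \<in> borel_measurable M" using E_integrable[OF f] by auto
  define h where "h n t = min \<bar>f t\<bar> (real n)" for n t
  have h_bounded: "bounded_ae M (h n) (real n)" for n
    unfolding bounded_ae_def h_def by auto
  have "(\<integral>t. \<bar>h n t\<bar> \<partial>M) \<le> N f" for n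
  proof -
    have "(\<integral>t. \<bar>h n t\<bar> \<partial>M) \<le> N (h n)" using bounded_ae_in_E[OF h_bounded] by blast
    also have "\<dots> \<le> N f" using bounded_ae_in_E[OF h_bounded] f by (intro N_mono) (auto simp: h_def)
    finally show ?thesis .
  qed
  moreover have "(\<lambda>n. \<integral>t. \<bar>h n t\<bar> \<partial>M) \<longlonglongrightarrow> (\<integral>t. \<bar>f t\<bar> \<partial>M)"
  proof (rule integral_dominated_convergence[where w="\<lambda>t. \<bar>f t\<bar>"])
    show "AE t in M. (\<lambda>n. \<bar>h n t\<bar>) \<longlonglongrightarrow> \<bar>f t\<bar>"
    proof (rule AE_I2)
      fix t
      obtain n0 where "\<bar>f t\<bar> \<le> real n0" using real_arch_simple by blast
      then have "\<forall>n\<ge>n0. \<bar>h n t\<bar> = \<bar>f t\<bar>" unfolding h_def by auto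
      then show "(\<lambda>n. \<bar>h n t\<bar>) \<longlonglongrightarrow> \<bar>f t\<bar>"
        by (intro tendsto_eventually) (auto simp: eventually_sequentially)
    qed
  qed (use E_integrable[OF f] in \<open>auto simp: h_def\<close>)
  ultimately show ?thesis by (intro LIMSEQ_le_const2) auto
qed

lemma lincomb_in_E: "(\<And>i. x i \<in> E) \<Longrightarrow> (\<lambda>t. \<Sum>i<(k::nat). a i * x i t) \<in> E"
  by (induction k) (simp_all add: zero_in_E E_add E_scale)

lemma N_lincomb_le:
  assumes "\<And>i. x i \<in> E"
  shows "N (\<lambda>t. \<Sum>i<(k::nat). a i * x i t) \<le> (\<Sum>i<k. \<bar>a i\<bar> * N (x i))"
proof (induction k)
  case (Suc k)
  have "N (\<lambda>t. (\<Sum>i<k. a i * x i t) + a k * x k t)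
        \<le> N (\<lambda>t. \<Sum>i<k. a i * x i t) + N (\<lambda>t. a k * x k t)"
    using assms by (intro N_triangle lincomb_in_E E_scale)
  then show ?case using Suc N_scale[OF assms] by simp
qed (simp add: N_zero)

lemma scaled_in_closed_span:
  assumes "\<And>i. x i \<in> E"
  shows "(\<lambda>t. c * x n t) \<in> closed_span E N x"
proof -
  define a where "a i = (if i = n then c else 0)" for i
  have "(\<Sum>i<Suc n. a i * x i t) = c * x n t" for t
    unfolding a_def by (simp add: if_distrib sum.delta cong: if_cong)
  then show ?thesis
    unfolding closed_span_def using assms N_zero
    by (auto intro!: E_scale exI[of _ "Suc n"] exI[of _ a])
qed

text \<open>Both sides of the inequality are 1-Lipschitz in N (the right one
because |f|_1 \<le> N f), so it passes from the linear span to its closure.\<close>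

lemma closed_span_lower_bound:
  assumes x: "\<And>i. x i \<in> E" and "c > 0"
    and lincomb: "\<And>k a. c * N (\<lambda>t. \<Sum>i<k. a i * x i t) \<le> (\<integral>t. \<bar>\<Sum>i<k. a i * x i t\<bar> \<partial>M)"
    and y: "y \<in> closed_span E N x"
  shows "c * N y \<le> (\<integral>t. \<bar>y t\<bar> \<partial>M)"
proof (rule field_le_epsilon)
  fix e :: real assume "0 < e"
  have yE: "y \<in> E" using y unfolding closed_span_def by auto
  define \<epsilon> where "\<epsilon> = e / (1 + c)"
  have "\<epsilon> > 0" using \<open>0 < e\<close> \<open>c > 0\<close> by (simp add: \<epsilon>_def)
  then obtain k a where approx: "N (\<lambda>t. y t - (\<Sum>i<k. a i * x i t)) < \<epsilon>"
    using y unfolding closed_span_def by blast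
  define s where "s t = (\<Sum>i<k. a i * x i t)" for t
  have sE: "s \<in> E" unfolding s_def by (rule lincomb_in_E[OF x])
  have dE: "(\<lambda>t. y t - s t) \<in> E" using E_diff[OF yE sE] .
  have Nd: "N (\<lambda>t. y t - s t) < \<epsilon>" using approx by (simp add: s_def)
  have "N y \<le> N s + N (\<lambda>t. y t - s t)" using N_triangle[OF sE dE] by simp
  then have "c * N y \<le> c * N s + c * \<epsilon>"
    using Nd \<open>c > 0\<close> by (smt (verit) mult_left_mono distrib_left)
  also have "c * N s \<le> (\<integral>t. \<bar>s t\<bar> \<partial>M)" using lincomb unfolding s_def .
  also have "(\<integral>t. \<bar>s t\<bar> \<partial>M) \<le> (\<integral>t. \<bar>y t\<bar> + \<bar>y t - s t\<bar> \<partial>M)"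
    using E_integrable[OF sE] E_integrable[OF yE] by (intro integral_mono) auto
  also have "\<dots> = (\<integral>t. \<bar>y t\<bar> \<partial>M) + (\<integral>t. \<bar>y t - s t\<bar> \<partial>M)"
    using E_integrable[OF sE] E_integrable[OF yE] by (intro Bochner_Integration.integral_add) auto
  also have "\<dots> \<le> (\<integral>t. \<bar>y t\<bar> \<partial>M) + \<epsilon>" using integral_abs_le_N[OF dE] Nd by simp
  finally have "c * N y \<le> (\<integral>t. \<bar>y t\<bar> \<partial>M) + \<epsilon> * (1 + c)" by (simp add: algebra_simps)
  also have "\<epsilon> * (1 + c) = e" using \<open>c > 0\<close> by (simp add: \<epsilon>_def)
  finally show "c * N y \<le> (\<integral>t. \<bar>y t\<bar> \<partial>M) + e" .
qed

lemma disjoint_lower_bound_on_closed_span: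
  assumes x: "\<And>i. x i \<in> E" and "disjoint_seq M x" and "\<And>i. N (x i) \<le> 1"
    and "\<delta> > 0" and lower: "\<And>i. \<delta> \<le> (\<integral>t. \<bar>x i t\<bar> \<partial>M)"
    and "y \<in> closed_span E N x"
  shows "\<delta> * N y \<le> (\<integral>t. \<bar>y t\<bar> \<partial>M)"
proof (rule closed_span_lower_bound[OF x \<open>\<delta> > 0\<close> _ \<open>y \<in> closed_span E N x\<close>])
  fix k a
  have "\<delta> * N (\<lambda>t. \<Sum>i<k. a i * x i t) \<le> \<delta> * (\<Sum>i<k. \<bar>a i\<bar> * N (x i))"
    using N_lincomb_le[OF x] \<open>\<delta> > 0\<close> by simp
  also have "\<dots> \<le> (\<Sum>i<k. \<bar>a i\<bar> * \<delta>)"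
    using assms(3) \<open>\<delta> > 0\<close> by (simp add: sum_distrib_left mult_left_le algebra_simps sum_mono)
  also have "\<dots> \<le> (\<Sum>i<k. \<bar>a i\<bar> * (\<integral>t. \<bar>x i t\<bar> \<partial>M))"
    by (intro sum_mono mult_left_mono lower) auto
  also have "\<dots> = (\<integral>t. \<bar>\<Sum>i<k. a i * x i t\<bar> \<partial>M)"
    using integral_abs_lincomb_disjoint[OF E_integrable[OF x] \<open>disjoint_seq M x\<close>] by simp
  finally show "\<delta> * N (\<lambda>t. \<Sum>i<k. a i * x i t) \<le> (\<integral>t. \<bar>\<Sum>i<k. a i * x i t\<bar> \<partial>M)" .
qed

lemma DSS_imp_normalized_disjoint_L1_tendsto_0:
  assumes DSS: "incl_DSS M E N"
    and x: "\<And>n. x n \<in> E" "\<And>n. N (x n) = 1" and "disjoint_seq M x"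
  shows "(\<lambda>n. \<integral>t. \<bar>x n t\<bar> \<partial>M) \<longlonglongrightarrow> 0"
proof (rule ccontr)
  assume not_tendsto: "\<not> (\<lambda>n. \<integral>t. \<bar>x n t\<bar> \<partial>M) \<longlonglongrightarrow> 0"
  obtain \<delta> and r :: "nat \<Rightarrow> nat" where "\<delta> > 0" "strict_mono r" and lower: "\<And>n. \<delta> \<le> (\<integral>t. \<bar>x (r n) t\<bar> \<partial>M)"
    using not_tendsto_zero_imp_subseq_bounded_below[OF not_tendsto] by auto
  define z where "z n = x (r n)" for n
  have zE: "\<And>n. z n \<in> E" and zN: "\<And>n. N (z n) = 1" using x unfolding z_def by auto
  have "disjoint_seq M z"
    unfolding z_def using disjoint_seq_subseq[OF \<open>disjoint_seq M x\<close> \<open>strict_mono r\<close>] .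
  moreover have "\<forall>y\<in>closed_span E N z. \<delta> * N y \<le> (\<integral>t. \<bar>y t\<bar> \<partial>M)"
    using disjoint_lower_bound_on_closed_span[OF zE \<open>disjoint_seq M z\<close> _ \<open>\<delta> > 0\<close>] lower zN
    unfolding z_def by simp
  moreover have "\<not> (AE t in M. z n t = 0)" for n using N_eq_0_iff[OF zE] zN by simp
  ultimately show False using DSS zE \<open>\<delta> > 0\<close> unfolding incl_DSS_def by blast
qed

lemma normalized_disjoint_L1_tendsto_0_imp_DSS:
  assumes L1: "\<And>x. (\<forall>n. x n \<in> E \<and> N (x n) = 1) \<Longrightarrow> disjoint_seq M x \<Longrightarrow>
                     (\<lambda>n. \<integral>t. \<bar>x n t\<bar> \<partial>M) \<longlonglongrightarrow> 0"
  shows "incl_DSS M E N"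
  unfolding incl_DSS_def
proof
  assume "\<exists>x. (\<forall>n. x n \<in> E \<and> \<not> (AE t in M. x n t = 0)) \<and> disjoint_seq M x \<and>
           (\<exists>c>0. \<forall>y\<in>closed_span E N x. c * N y \<le> (\<integral>t. \<bar>y t\<bar> \<partial>M))"
  then obtain x c where x: "\<And>n. x n \<in> E" and nonzero: "\<And>n. \<not> (AE t in M. x n t = 0)"
    and "disjoint_seq M x" and "c > 0"
    and lower: "\<forall>y\<in>closed_span E N x. c * N y \<le> (\<integral>t. \<bar>y t\<bar> \<partial>M)" by blast
  have "N (x n) > 0" for n
    using N_nonneg[OF x] N_eq_0_iff[OF x] nonzero by (metis less_eq_real_def)
  define y where "y n = (\<lambda>t. (1 / N (x n)) * x n t)" for n
  have yE: "y n \<in> E" for n unfolding y_def by (rule E_scale[OF x])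
  have yN: "N (y n) = 1" for n
    unfolding y_def using N_scale[OF x, of "1 / N (x n)" n] \<open>N (x n) > 0\<close> by simp
  have lower_y: "c \<le> (\<integral>t. \<bar>y n t\<bar> \<partial>M)" for n
  proof -
    have "y n \<in> closed_span E N x" unfolding y_def by (rule scaled_in_closed_span[of x, OF x])
    then show ?thesis using lower yN[of n] by fastforce
  qed
  have "disjoint_seq M y"
    unfolding y_def using disjoint_seq_scale[OF \<open>disjoint_seq M x\<close>, of "\<lambda>n. 1 / N (x n)"] .
  then have "(\<lambda>n. \<integral>t. \<bar>y n t\<bar> \<partial>M) \<longlonglongrightarrow> 0"
    using yE yN by (intro L1) auto
  from order_tendstoD(2)[OF this \<open>c > 0\<close>] obtain n where "(\<integral>t. \<bar>y n t\<bar> \<partial>M) < c"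
    by (auto simp: eventually_sequentially)
  with lower_y[of n] show False by simp
qed

end

theorem proposition4p1:
  assumes "repr_ocbl M E N"
  shows "incl_DSS M E N \<longleftrightarrow>
    (\<forall>x. (\<forall>n. x n \<in> E \<and> N (x n) = 1) \<and> disjoint_seq M x \<longrightarrow>
         (\<lambda>n. \<integral>t. \<bar>x n t\<bar> \<partial>M) \<longlonglongrightarrow> 0)"
proof -
  interpret ocbl_representation M E N by standard (rule assms)
  show ?thesis
    using DSS_imp_normalized_disjoint_L1_tendsto_0 normalized_disjoint_L1_tendsto_0_imp_DSS
    by blast
qed

end
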